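(* In the following setting: $n$ training samples with labels in $\{1,\dots,K\}$, indicator matrix $F\in\mathbb{R}^{K\times n}$, $n_k$ samples in class $k$; basis $G_1,\dots,G_r$ ($r\le n$) a subset of the training samples with $r_k\ge1$ basis vectors in class $k$; $F_{G_i}$ the class indicator of $G_i$; $\tilde W\in\mathbb{R}^{r\times n}$ entrywise nonnegative, columns summing to one, full row rank, with $\tilde W_{ij}=0$ whenever $F_{G_i}\neq F_j$; $\tilde W'=\tilde W+\Delta W$ with $\Delta W\in\mathbb{R}^{r\times n}$; $\xi=\|\tilde W^\dagger\|_2\|\Delta W\|_2$, $\delta=\|\Delta W\|_F/\|\tilde W\|_F$, $n_\rho=\sqrt{\max_kn_k/\min_kn_k}$, $r_\rho=\sqrt{\max_kr_k/\min_kr_k}$; $X=F\tilde W^\dagger$, $X'=F\tilde W'^\dagger$, $\gamma=\|X\|_F^2\|\tilde W\|_F^2/\|X\tilde W\|_F^2$, $\gamma'=\|X'\|_F^2\|\tilde W'\|_F^2/\|X'\tilde W'\|_F^2$. If $\xi<1/n_\rho$, then $\delta\le\xi$ and $$\gamma'\le\gamma(1+\delta)^2\Big(\frac{1+r_\rho\xi}{1-n_\rho\xi}\Big)^2\le\gamma\frac{(1+r_\rho\xi)^4}{(1-n_\rho\xi)^2}.$$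
   Context: The columns of $F$ are standard basis vectors of $\mathbb{R}^K$: $F_j=e_k$ iff sample $j$ is in class $k$. $\|\cdot\|_2$ of a matrix is the spectral norm; $M^\dagger$ is the Moore–Penrose pseudo-inverse. *)

theory Defs
  imports "HOL-Analysis.Analysis"
begin

definition pinv :: "real^'n^'m \<Rightarrow> real^'m^'n" where
  "pinv A = (THE B. A ** B ** A = A \<and> B ** A ** B = B \<and>
                    transpose (A ** B) = A ** B \<and> transpose (B ** A) = B ** A)"

definition spec_norm :: "real^'n^'m \<Rightarrow> real" where
  "spec_norm A = onorm (\<lambda>x. A *v x)"

definition frob_norm :: "real^'n^'m \<Rightarrow> real" where
  "frob_norm A = sqrt (\<Sum>i\<in>UNIV. \<Sum>j\<in>UNIV. (A $ i $ j)\<^sup>2)"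

definition ind_mat :: "('n \<Rightarrow> 'k) \<Rightarrow> real^'n^'k" where
  "ind_mat lab = (\<chi> k j. if lab j = k then 1 else 0)"

end

theory Submission
  imports Defs
begin

text \<open>
  Since \<open>W\<close> is supported on the class blocks and its columns sum to one, the class indicator
  factors as \<open>F = E W\<close>, where \<open>E\<close> is the class indicator of the basis. Full row rank makes
  \<open>W\<^sup>\<dagger>\<close> a right inverse, so \<open>X = E\<close> and \<open>X W = F\<close>. Writing \<open>a = \<parallel>W\<^sup>\<dagger>\<parallel>\<^sub>2\<close>,
  \<open>s = \<parallel>\<Delta>W\<parallel>\<^sub>2\<close> and \<open>\<xi> = a s < 1\<close>, a lower bound on \<open>W'\<^sup>T\<close> gives
  \<open>\<parallel>W'\<^sup>\<dagger>\<parallel>\<^sub>2 \<le> a / (1 - \<xi>)\<close>. From \<open>X' = E (I - \<Delta>W W'\<^sup>\<dagger>)\<close> and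
  \<open>X' W' = F + E \<Delta>W (I - P)\<close>, with \<open>P = W'\<^sup>\<dagger> W'\<close> an orthogonal projector, one gets
  \<open>\<parallel>X'\<parallel>\<^sub>F \<le> \<parallel>E\<parallel>\<^sub>F / (1 - \<xi>)\<close>, \<open>\<parallel>X' W'\<parallel>\<^sub>F \<ge> \<parallel>F\<parallel>\<^sub>F - s \<parallel>E\<parallel>\<^sub>F\<close> and
  \<open>\<parallel>X'\<parallel>\<^sub>F \<le> a \<parallel>X' W'\<parallel>\<^sub>F / (1 - \<xi>)\<close>; together they give
  \<open>\<parallel>X'\<parallel>\<^sub>F / \<parallel>X' W'\<parallel>\<^sub>F \<le> (\<parallel>E\<parallel>\<^sub>F / \<parallel>F\<parallel>\<^sub>F) (1 + \<xi>) / (1 - \<xi>)\<close>. Hence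
  \<open>\<gamma>' \<le> \<gamma> (1 + \<delta>)\<^sup>2 ((1 + \<xi>) / (1 - \<xi>))\<^sup>2\<close>, which is sharper than the claim because
  \<open>r\<^sub>\<rho>, n\<^sub>\<rho> \<ge> 1\<close>.
\<close>

lemma matrix_add_rdistrib: "((A::real^'n^'m) + B) ** (C::real^'k^'n) = A ** C + B ** C"
  by (simp add: matrix_matrix_mult_def vec_eq_iff sum.distrib distrib_right)

lemma matrix_diff_rdistrib: "((A::real^'n^'m) - B) ** (C::real^'k^'n) = A ** C - B ** C"
  by (simp add: matrix_matrix_mult_def vec_eq_iff sum_subtractf left_diff_distrib)

lemma matrix_diff_ldistrib: "(A::real^'n^'m) ** ((B::real^'k^'n) - C) = A ** B - A ** C"
  by (simp add: matrix_matrix_mult_def vec_eq_iff sum_subtractf right_diff_distrib)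

lemma matrix_mult_uminus_right: "(A::real^'n^'m) ** (- B::real^'k^'n) = - (A ** B)"
  by (simp add: matrix_matrix_mult_def vec_eq_iff sum_negf)

lemma transpose_add: "transpose ((A::real^'n^'m) + B) = transpose A + transpose B"
  by (simp add: transpose_def vec_eq_iff)

lemma transpose_diff: "transpose ((A::real^'n^'m) - B) = transpose A - transpose B"
  by (simp add: transpose_def vec_eq_iff)

lemma inner_transpose_matrix_vector:
  "inner (transpose A *v x) y = inner x ((A::real^'n^'m) *v y)"
  by (simp add: dot_lmul_matrix)

lemma mat_1_neq_0: "(mat 1 :: real^'n^'n) \<noteq> 0"
proof
  assume "(mat 1 :: real^'n^'n) = 0"
  then have "(mat 1 :: real^'n^'n) $ undefined $ undefined = 0" by simp
  then show False by (simp add: mat_def)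
qed

subsection \<open>Spectral norm\<close>

lemma norm_matrix_vector_le_spec_norm: "norm ((A::real^'n^'m) *v x) \<le> spec_norm A * norm x"
  unfolding spec_norm_def by (rule onorm) simp

lemma spec_norm_nonneg: "0 \<le> spec_norm (A::real^'n^'m)"
  unfolding spec_norm_def by (rule onorm_pos_le) simp

lemma spec_norm_le:
  assumes "\<And>x. norm ((A::real^'n^'m) *v x) \<le> b * norm x"
  shows "spec_norm A \<le> b"
  unfolding spec_norm_def by (rule onorm_le) (use assms in auto)

lemma spec_norm_transpose_le: "spec_norm (transpose (A::real^'n^'m)) \<le> spec_norm A"
proof (rule spec_norm_le)
  fix x
  let ?y = "transpose A *v x"
  have "(norm ?y)\<^sup>2 = inner x (A *v ?y)"
    by (simp only: dot_square_norm [symmetric] inner_transpose_matrix_vector)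
  also have "\<dots> \<le> norm x * norm (A *v ?y)" by (rule norm_cauchy_schwarz)
  also have "\<dots> \<le> norm x * (spec_norm A * norm ?y)"
    by (rule mult_left_mono [OF norm_matrix_vector_le_spec_norm]) simp
  finally have "norm ?y * norm ?y \<le> (spec_norm A * norm x) * norm ?y"
    by (simp add: power2_eq_square algebra_simps)
  then show "norm ?y \<le> spec_norm A * norm x"
    using spec_norm_nonneg [of A] by (cases "norm ?y = 0") (auto simp: mult_le_cancel_right)
qed

lemma spec_norm_mult_le:
  "spec_norm ((A::real^'n^'m) ** (B::real^'k^'n)) \<le> spec_norm A * spec_norm B"
proof -
  have "(\<lambda>x. (A ** B) *v x) = (\<lambda>x. A *v x) \<circ> (\<lambda>x. B *v x)"
    by (simp add: fun_eq_iff matrix_vector_mul_assoc)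
  then show ?thesis
    unfolding spec_norm_def by (simp add: onorm_compose)
qed

lemma spec_norm_mat_1_diff_le: "spec_norm (mat 1 - (A::real^'n^'n)) \<le> 1 + spec_norm A"
proof (rule spec_norm_le)
  fix x
  have "norm ((mat 1 - A) *v x) \<le> norm x + norm (A *v x)"
    by (simp add: matrix_vector_mult_diff_rdistrib norm_triangle_ineq4)
  also have "\<dots> \<le> (1 + spec_norm A) * norm x"
    using norm_matrix_vector_le_spec_norm [of A x] by (simp add: algebra_simps)
  finally show "norm ((mat 1 - A) *v x) \<le> (1 + spec_norm A) * norm x" .
qed

lemma spec_norm_mat_1_diff_projection_le:
  fixes P :: "real^'n^'n"
  assumes "transpose P = P" and "P ** P = P"
  shows "spec_norm (mat 1 - P) \<le> 1"
proof (rule spec_norm_le)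
  fix x
  define Q where "Q = mat 1 - P"
  have Q_sym: "transpose Q = Q" using assms(1) by (simp add: Q_def transpose_diff)
  have Q_idem: "Q ** Q = Q" using assms(2) by (simp add: Q_def matrix_diff_ldistrib matrix_diff_rdistrib)
  have "(norm (Q *v x))\<^sup>2 = inner (transpose Q *v x) (Q *v x)"
    by (simp only: Q_sym dot_square_norm)
  also have "\<dots> = inner x (Q *v x)"
    by (simp only: inner_transpose_matrix_vector matrix_vector_mul_assoc Q_idem)
  also have "\<dots> \<le> norm x * norm (Q *v x)" by (rule norm_cauchy_schwarz)
  finally have "norm (Q *v x) * norm (Q *v x) \<le> norm x * norm (Q *v x)"
    by (simp add: power2_eq_square)
  then show "norm ((mat 1 - P) *v x) \<le> 1 * norm x"
    by (cases "norm (Q *v x) = 0") (auto simp: Q_def mult_le_cancel_right)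
qed

lemma frob_norm_eq_norm: "frob_norm (A::real^'n^'m) = norm A"
  unfolding frob_norm_def norm_vec_def L2_set_def
  by (simp add: sum_nonneg)

lemma power2_norm_vec: "(norm (x::'a::real_normed_vector^'n))\<^sup>2 = (\<Sum>i\<in>UNIV. (norm (x $ i))\<^sup>2)"
  unfolding norm_vec_def L2_set_def by (simp add: sum_nonneg)

lemma norm_matrix_mult_le_spec_norm:
  "norm ((A::real^'n^'m) ** (B::real^'k^'n)) \<le> norm A * spec_norm B"
proof -
  have row: "(A ** B) $ i = transpose B *v (A $ i)" for i
    by (simp add: matrix_matrix_mult_def matrix_vector_mult_def transpose_def vec_eq_iff mult.commute)
  have "norm ((A ** B) $ i) \<le> spec_norm B * norm (A $ i)" for i
    unfolding row
    using norm_matrix_vector_le_spec_norm [of "transpose B" "A $ i"] spec_norm_transpose_le [of B]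
    by (meson mult_right_mono norm_ge_zero order_trans)
  then have "(norm (A ** B))\<^sup>2 \<le> (\<Sum>i\<in>UNIV. (spec_norm B * norm (A $ i))\<^sup>2)"
    unfolding power2_norm_vec [of "A ** B"] by (intro sum_mono power_mono) simp_all
  also have "\<dots> = (spec_norm B * norm A)\<^sup>2"
    by (simp add: power_mult_distrib power2_norm_vec [of A] sum_distrib_left)
  finally show ?thesis
    using spec_norm_nonneg [of B]
    by (metis abs_of_nonneg mult.commute mult_nonneg_nonneg norm_ge_zero real_le_rsqrt real_sqrt_abs)
qed

subsection \<open>Moore--Penrose pseudo-inverse\<close>

definition penrose :: "real^'n^'m \<Rightarrow> real^'m^'n \<Rightarrow> bool" where
  "penrose A B \<longleftrightarrow> A ** B ** A = A \<and> B ** A ** B = B \<and>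
                    transpose (A ** B) = A ** B \<and> transpose (B ** A) = B ** A"

lemma penrose_unique:
  assumes "penrose A B" and "penrose A C"
  shows "B = C"
proof -
  have B: "A ** B ** A = A" "B ** A ** B = B" "transpose (A ** B) = A ** B" "transpose (B ** A) = B ** A"
    using assms(1) unfolding penrose_def by auto
  have C: "A ** C ** A = A" "C ** A ** C = C" "transpose (A ** C) = A ** C" "transpose (C ** A) = C ** A"
    using assms(2) unfolding penrose_def by auto
  have "B = B ** transpose (A ** B)" using B(2,3) by (simp add: matrix_mul_assoc)
  also have "\<dots> = B ** transpose B ** transpose (A ** C ** A)"
    using C(1) by (simp add: matrix_transpose_mul matrix_mul_assoc)
  also have "\<dots> = B ** transpose (A ** B) ** transpose (A ** C)"
    by (simp add: matrix_transpose_mul matrix_mul_assoc)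
  also have "\<dots> = B ** A ** C" using B(2,3) C(3) by (simp add: matrix_mul_assoc)
  finally have BC: "B = B ** A ** C" .
  have "C = transpose (C ** A) ** C" using C(2,4) by simp
  also have "\<dots> = transpose (A ** B ** A) ** transpose C ** C"
    using B(1) by (simp add: matrix_transpose_mul matrix_mul_assoc)
  also have "\<dots> = transpose (B ** A) ** transpose (C ** A) ** C"
    by (simp add: matrix_transpose_mul matrix_mul_assoc)
  also have "\<dots> = B ** A ** (C ** A ** C)" using B(4) C(4) by (simp add: matrix_mul_assoc)
  finally show ?thesis using BC C(2) by simp
qed

lemma invertible_mult_transpose:
  fixes A :: "real^'n^'m"
  assumes inj: "\<And>y. transpose A *v y = 0 \<Longrightarrow> y = 0"
  shows "invertible (A ** transpose A)"
proof -
  have "y = 0" if "(A ** transpose A) *v y = 0" for y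
  proof -
    have "inner (transpose A *v y) (transpose A *v y) = inner y ((A ** transpose A) *v y)"
      by (simp only: inner_transpose_matrix_vector matrix_vector_mul_assoc)
    then show "y = 0" using that inj by simp
  qed
  then show ?thesis
    using matrix_left_invertible_ker invertible_left_inverse by blast
qed

text \<open>For full row rank the pseudo-inverse is \<open>A\<^sup>T (A A\<^sup>T)\<^sup>-\<^sup>1\<close>.\<close>

lemma penrose_right_inverse_exists:
  fixes A :: "real^'n^'m"
  assumes inj: "\<And>y. transpose A *v y = 0 \<Longrightarrow> y = 0"
  shows "\<exists>B. penrose A B \<and> A ** B = mat 1"
proof -
  let ?S = "A ** transpose A"
  obtain M where M: "?S ** M = mat 1" "M ** ?S = mat 1"
    using invertible_mult_transpose [OF inj] unfolding invertible_def by blast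
  have "transpose M ** ?S = mat 1"
    using arg_cong [OF M(1), of transpose] by (simp add: matrix_transpose_mul)
  then have M_sym: "transpose M = M"
    by (metis M(1) matrix_mul_assoc matrix_mul_lid matrix_mul_rid)
  let ?B = "transpose A ** M"
  have AB: "A ** ?B = mat 1" using M(1) by (simp add: matrix_mul_assoc)
  moreover have "penrose A ?B"
    unfolding penrose_def
    using AB M_sym by (simp add: matrix_transpose_mul) (metis matrix_mul_assoc matrix_mul_rid)
  ultimately show ?thesis by blast
qed

lemma pinv_right_inverse:
  fixes A :: "real^'n^'m"
  assumes "\<And>y. transpose A *v y = 0 \<Longrightarrow> y = 0"
  shows "penrose A (pinv A)" and "A ** pinv A = mat 1"
proof -
  obtain B where B: "penrose A B" "A ** B = mat 1"
    using penrose_right_inverse_exists [OF assms] by blast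
  have "pinv A = B"
    unfolding pinv_def
  proof (rule the_equality)
    show "A ** B ** A = A \<and> B ** A ** B = B \<and> transpose (A ** B) = A ** B \<and> transpose (B ** A) = B ** A"
      using B(1) unfolding penrose_def .
  next
    fix C
    assume "A ** C ** A = A \<and> C ** A ** C = C \<and> transpose (A ** C) = A ** C \<and> transpose (C ** A) = C ** A"
    then show "C = B" using penrose_unique [OF B(1)] unfolding penrose_def by simp
  qed
  with B show "penrose A (pinv A)" and "A ** pinv A = mat 1" by simp_all
qed

lemma spec_norm_right_inverse_pos:
  assumes "(W::real^'n^'r) ** B = mat 1"
  shows "0 < spec_norm B"
proof -
  have "norm (mat 1 :: real^'r^'r) \<le> norm W * spec_norm B"
    using norm_matrix_mult_le_spec_norm [of W B] assms by simp
  then show ?thesis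
    using mat_1_neq_0 spec_norm_nonneg [of B] by (cases "spec_norm B = 0") auto
qed

text \<open>
  A lower bound \<open>c \<parallel>y\<parallel> \<le> d \<parallel>A\<^sup>T y\<parallel>\<close> bounds \<open>\<parallel>A\<^sup>\<dagger>\<parallel>\<^sub>2\<close> by \<open>d / c\<close>: writing
  \<open>A\<^sup>\<dagger> z = A\<^sup>T y\<close> with \<open>A A\<^sup>T y = z\<close>, one has \<open>\<parallel>A\<^sup>T y\<parallel>\<^sup>2 = \<langle>y, z\<rangle>\<close>.
\<close>

lemma spec_norm_pinv_le:
  fixes A :: "real^'n^'m"
  assumes lower: "\<And>y. c * norm y \<le> d * norm (transpose A *v y)" and c: "0 < c" and d: "0 \<le> d"
  shows "spec_norm (pinv A) \<le> d / c"
proof -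
  define B where "B = pinv A"
  have inj: "y = 0" if "transpose A *v y = 0" for y
    using lower [of y] that c by (simp add: mult_le_0_iff)
  note pinv = pinv_right_inverse [of A, OF inj, folded B_def]
  have B_eq: "B = transpose A ** transpose B ** B"
  proof -
    have "B = transpose (B ** A) ** B" using pinv(1) unfolding penrose_def by simp
    then show ?thesis by (simp only: matrix_transpose_mul)
  qed
  show ?thesis
    unfolding B_def [symmetric]
  proof (rule spec_norm_le)
    fix z
    define y where "y = transpose B *v (B *v z)"
    have Bz: "B *v z = transpose A *v y"
      by (subst B_eq) (simp only: y_def matrix_vector_mul_assoc matrix_mul_assoc)
    have z: "z = A *v (transpose A *v y)"
      by (metis Bz pinv(2) matrix_vector_mul_assoc matrix_vector_mul_lid)
    have "(norm (B *v z))\<^sup>2 = inner y z"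
      by (simp only: Bz dot_square_norm [symmetric] inner_transpose_matrix_vector z [symmetric])
    also have "\<dots> \<le> norm y * norm z" by (rule norm_cauchy_schwarz)
    finally have "c * (norm (B *v z))\<^sup>2 \<le> c * norm y * norm z"
      using c by (simp add: mult.assoc)
    also have "\<dots> \<le> d * norm (B *v z) * norm z"
      using lower [of y] by (simp add: Bz mult_right_mono)
    finally have "c * norm (B *v z) * norm (B *v z) \<le> d * norm z * norm (B *v z)"
      by (simp add: power2_eq_square algebra_simps)
    then have "c * norm (B *v z) \<le> d * norm z"
      using c d by (cases "norm (B *v z) = 0") (auto simp: mult_le_cancel_right)
    then show "norm (B *v z) \<le> d / c * norm z"
      using c by (simp add: field_simps)
  qed
qed

subsection \<open>Perturbation of a full-row-rank matrix\<close>

lemma transpose_lower_bound_perturb: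
  fixes W dW :: "real^'n^'r"
  assumes WB: "W ** B = mat 1"
  shows "(1 - spec_norm B * spec_norm dW) * norm y \<le> spec_norm B * norm (transpose (W + dW) *v y)"
proof -
  have "transpose B ** transpose W = mat 1"
    using WB by (metis matrix_transpose_mul transpose_mat)
  then have "norm y = norm (transpose B *v (transpose W *v y))"
    by (metis matrix_vector_mul_assoc matrix_vector_mul_lid)
  also have "\<dots> \<le> spec_norm B * norm (transpose W *v y)"
    using norm_matrix_vector_le_spec_norm [of "transpose B"] spec_norm_transpose_le [of B]
    by (meson mult_right_mono norm_ge_zero order_trans)
  also have "\<dots> \<le> spec_norm B * (norm (transpose (W + dW) *v y) + spec_norm dW * norm y)"
  proof (rule mult_left_mono [OF _ spec_norm_nonneg])
    have "transpose W *v y = transpose (W + dW) *v y - transpose dW *v y"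
      by (simp add: transpose_add matrix_vector_mult_add_rdistrib)
    then have "norm (transpose W *v y) \<le> norm (transpose (W + dW) *v y) + norm (transpose dW *v y)"
      by (simp add: norm_triangle_ineq4)
    also have "norm (transpose dW *v y) \<le> spec_norm dW * norm y"
      using norm_matrix_vector_le_spec_norm [of "transpose dW" y] spec_norm_transpose_le [of dW]
      by (meson mult_right_mono norm_ge_zero order_trans)
    finally show "norm (transpose W *v y) \<le> norm (transpose (W + dW) *v y) + spec_norm dW * norm y"
      by simp
  qed
  finally show ?thesis by (simp add: algebra_simps)
qed

lemma transpose_injective_perturb:
  fixes W dW :: "real^'n^'r"
  assumes inj: "\<And>y. transpose W *v y = 0 \<Longrightarrow> y = 0"
    and small: "spec_norm (pinv W) * spec_norm dW < 1"
    and "transpose (W + dW) *v y = 0"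
  shows "y = 0"
  using transpose_lower_bound_perturb [OF pinv_right_inverse(2) [of W, OF inj], of dW y] assms(3) small
  by (simp add: mult_le_0_iff)

lemma spec_norm_pinv_perturb_le:
  fixes W dW :: "real^'n^'r"
  assumes inj: "\<And>y. transpose W *v y = 0 \<Longrightarrow> y = 0"
    and small: "spec_norm (pinv W) * spec_norm dW < 1"
  shows "spec_norm (pinv (W + dW)) \<le> spec_norm (pinv W) / (1 - spec_norm (pinv W) * spec_norm dW)"
  using transpose_lower_bound_perturb [OF pinv_right_inverse(2) [of W, OF inj], of dW] small
    spec_norm_nonneg [of "pinv W"]
  by (intro spec_norm_pinv_le) simp_all

lemma relative_norm_perturb_le:
  fixes W dW :: "real^'n^'r"
  assumes "W ** B = mat 1"
  shows "norm dW / norm W \<le> spec_norm B * spec_norm dW"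
proof -
  have "0 < norm W" using assms mat_1_neq_0 by auto
  have "norm dW = norm (W ** (B ** dW))" using assms by (simp add: matrix_mul_assoc)
  also have "\<dots> \<le> norm W * spec_norm (B ** dW)" by (rule norm_matrix_mult_le_spec_norm)
  also have "\<dots> \<le> norm W * (spec_norm B * spec_norm dW)"
    by (intro mult_left_mono spec_norm_mult_le norm_ge_zero)
  finally show ?thesis using \<open>0 < norm W\<close> by (simp add: divide_simps mult.commute)
qed

lemma norm_factor_mult_right_inverse_perturb_le:
  fixes E :: "real^'r^'k" and W dW :: "real^'n^'r"
  assumes "(W + dW) ** B' = mat 1"
  shows "norm (E ** W ** B') \<le> norm E * (1 + spec_norm dW * spec_norm B')"
proof -
  have "W ** B' = mat 1 - dW ** B'"
    using assms by (simp add: matrix_add_rdistrib algebra_simps)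
  then have "norm (E ** W ** B') = norm (E ** (mat 1 - dW ** B'))"
    by (simp add: matrix_mul_assoc [symmetric])
  also have "\<dots> \<le> norm E * spec_norm (mat 1 - dW ** B')" by (rule norm_matrix_mult_le_spec_norm)
  also have "\<dots> \<le> norm E * (1 + spec_norm dW * spec_norm B')"
    using spec_norm_mat_1_diff_le [of "dW ** B'"] spec_norm_mult_le [of dW B']
    by (intro mult_left_mono) simp_all
  finally show ?thesis .
qed

text \<open>\<open>P = B' (W + dW)\<close> is an orthogonal projector fixing the rows of \<open>W + dW\<close>, so
  \<open>W (I - P) = - dW (I - P)\<close>.\<close>

lemma norm_factor_mult_pinv_perturb_ge:
  fixes E :: "real^'r^'k" and W dW :: "real^'n^'r"
  assumes "penrose (W + dW) B'"
  shows "norm (E ** W) - norm E * spec_norm dW \<le> norm (E ** W ** B' ** (W + dW))"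
proof -
  define P where "P = B' ** (W + dW)"
  have P_sym: "transpose P = P" and P_idem: "P ** P = P" and P_fix: "(W + dW) ** P = W + dW"
    using assms unfolding penrose_def P_def by (simp_all add: matrix_mul_assoc)
  have WQ: "W ** (mat 1 - P) = - (dW ** (mat 1 - P))"
    using P_fix by (simp add: matrix_diff_ldistrib matrix_add_rdistrib algebra_simps)
  have "E ** W - E ** W ** P = E ** (W ** (mat 1 - P))"
    by (simp add: matrix_diff_ldistrib matrix_mul_assoc)
  also have "\<dots> = - (E ** (dW ** (mat 1 - P)))"
    by (simp only: WQ matrix_mult_uminus_right)
  finally have EWP: "E ** W ** P = E ** W + E ** (dW ** (mat 1 - P))"
    by (simp add: algebra_simps)
  have "norm (E ** (dW ** (mat 1 - P))) \<le> norm E * spec_norm (dW ** (mat 1 - P))"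
    by (rule norm_matrix_mult_le_spec_norm)
  also have "\<dots> \<le> norm E * spec_norm dW"
    using spec_norm_mult_le [of dW "mat 1 - P"] spec_norm_mat_1_diff_projection_le [OF P_sym P_idem]
      spec_norm_nonneg [of dW]
    by (intro mult_left_mono) (auto intro: order_trans mult_left_le)
  finally show ?thesis
    using EWP norm_triangle_ineq4 [of "E ** W ** P" "E ** (dW ** (mat 1 - P))"]
    by (simp add: P_def matrix_mul_assoc)
qed

text \<open>If \<open>a f \<le> e (1 + a s)\<close> the bound through \<open>D\<close> suffices; otherwise
  \<open>e s (1 + a s) < a s f\<close>, so \<open>f \<le> D (1 + a s)\<close> and the direct bound suffices.\<close>

lemma ratio_le_of_upper_bounds:
  fixes N D e f a s :: real
  assumes N: "0 \<le> N" and D: "0 \<le> D" and e: "0 \<le> e" and f: "0 < f"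
    and a: "0 < a" and s: "0 \<le> s" and x: "a * s < 1"
    and N_le: "N \<le> e / (1 - a * s)" and N_le': "N \<le> D * (a / (1 - a * s))"
    and D_ge: "f - e * s \<le> D"
  shows "N / D \<le> e / f * ((1 + a * s) / (1 - a * s))"
proof -
  have N1: "N * (1 - a * s) \<le> e" and N2: "N * (1 - a * s) \<le> D * a"
    using N_le N_le' x by (simp_all add: field_simps)
  have "N * (1 - a * s) * f \<le> D * e * (1 + a * s)"
  proof (cases "a * f \<le> e * (1 + a * s)")
    case True
    have "N * (1 - a * s) * f \<le> D * a * f" using N2 f by (simp add: mult_right_mono)
    also have "\<dots> \<le> D * (e * (1 + a * s))" using True D by (simp add: mult_left_mono mult.assoc)
    finally show ?thesis by simp
  next
    case False
    then have "e * (1 + a * s) * s \<le> a * f * s"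
      using s by (intro mult_right_mono) simp_all
    then have "f \<le> (f - e * s) * (1 + a * s)"
      by (simp add: algebra_simps)
    also have "\<dots> \<le> D * (1 + a * s)"
      using D_ge a s by (simp add: mult_right_mono)
    finally have "e * f \<le> e * (D * (1 + a * s))" using e by (simp add: mult_left_mono)
    moreover have "N * (1 - a * s) * f \<le> e * f" using N1 f by (simp add: mult_right_mono)
    ultimately show ?thesis by (simp add: ac_simps)
  qed
  then show ?thesis
    using e a s f x D by (cases "D = 0") (simp_all add: field_simps)
qed

lemma norm_mult_pinv_perturb_ratio_le:
  fixes W dW :: "real^'n^'r" and E :: "real^'r^'k" and F :: "real^'n^'k"
  assumes inj: "\<And>y. transpose W *v y = 0 \<Longrightarrow> y = 0"
    and small: "spec_norm (pinv W) * spec_norm dW < 1"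
    and F: "F = E ** W" and F_nz: "F \<noteq> 0"
  shows "norm (F ** pinv (W + dW)) / norm (F ** pinv (W + dW) ** (W + dW))
    \<le> norm E / norm F * ((1 + spec_norm (pinv W) * spec_norm dW) / (1 - spec_norm (pinv W) * spec_norm dW))"
proof -
  define W' B' a s where "W' = W + dW" and "B' = pinv W'"
    and "a = spec_norm (pinv W)" and "s = spec_norm dW"
  have x: "a * s < 1" and s: "0 \<le> s" using small by (simp_all add: a_def s_def spec_norm_nonneg)
  have a: "0 < a"
    unfolding a_def by (rule spec_norm_right_inverse_pos [OF pinv_right_inverse(2) [of W, OF inj]])
  have B'_le: "spec_norm B' \<le> a / (1 - a * s)"
    unfolding B'_def W'_def a_def s_def by (rule spec_norm_pinv_perturb_le [OF inj small])
  have "y = 0" if "transpose W' *v y = 0" for y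
    using transpose_injective_perturb [OF inj small] that by (simp add: W'_def)
  note W'B' = pinv_right_inverse [of W', OF this, folded B'_def]
  have "norm (F ** B') \<le> norm E * (1 + s * spec_norm B')"
    unfolding F s_def W'_def
    by (rule norm_factor_mult_right_inverse_perturb_le) (use W'B'(2) W'_def in simp)
  also have "\<dots> \<le> norm E * (1 + s * (a / (1 - a * s)))"
    using B'_le s by (intro mult_left_mono add_left_mono) simp_all
  finally have N_le: "norm (F ** B') \<le> norm E / (1 - a * s)"
    using x by (simp add: field_simps)
  have D_ge: "norm F - norm E * s \<le> norm (F ** B' ** W')"
    unfolding F s_def W'_def
    by (rule norm_factor_mult_pinv_perturb_ge) (use W'B'(1) W'_def in simp)
  have "norm (F ** B') = norm (F ** B' ** W' ** B')"
    using W'B'(2) by (simp add: matrix_mul_assoc [symmetric])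
  also have "\<dots> \<le> norm (F ** B' ** W') * spec_norm B'" by (rule norm_matrix_mult_le_spec_norm)
  finally have N_le': "norm (F ** B') \<le> norm (F ** B' ** W') * (a / (1 - a * s))"
    using mult_left_mono [OF B'_le, of "norm (F ** B' ** W')"] by simp
  show ?thesis
    using ratio_le_of_upper_bounds [OF _ _ _ _ a s x N_le N_le' D_ge] F_nz
    by (simp add: W'_def B'_def a_def s_def)
qed

lemma frob_ratio_pinv_perturb_le:
  fixes W dW :: "real^'n^'r" and E :: "real^'r^'k" and F :: "real^'n^'k"
  assumes inj: "\<And>y. transpose W *v y = 0 \<Longrightarrow> y = 0"
    and small: "spec_norm (pinv W) * spec_norm dW < 1"
    and F: "F = E ** W" and F_nz: "F \<noteq> 0"
  shows "(norm (F ** pinv (W + dW)))\<^sup>2 * (norm (W + dW))\<^sup>2 / (norm (F ** pinv (W + dW) ** (W + dW)))\<^sup>2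
    \<le> (norm (F ** pinv W))\<^sup>2 * (norm W)\<^sup>2 / (norm (F ** pinv W ** W))\<^sup>2 * (1 + norm dW / norm W)\<^sup>2
       * ((1 + spec_norm (pinv W) * spec_norm dW) / (1 - spec_norm (pinv W) * spec_norm dW))\<^sup>2"
    (is "?N\<^sup>2 * _ / ?D\<^sup>2 \<le> _ * ?q\<^sup>2")
proof -
  note WB = pinv_right_inverse(2) [of W, OF inj]
  have "norm (W + dW) \<le> norm W * (1 + norm dW / norm W)"
    using WB mat_1_neq_0 norm_triangle_ineq [of W dW] by (auto simp: algebra_simps)
  with norm_mult_pinv_perturb_ratio_le [OF assms]
  have "?N / ?D * norm (W + dW) \<le> norm E / norm F * ?q * (norm W * (1 + norm dW / norm W))"
    using small spec_norm_nonneg [of "pinv W"] spec_norm_nonneg [of dW]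
    by (intro mult_mono) simp_all
  then have "(?N / ?D * norm (W + dW))\<^sup>2 \<le> (norm E / norm F * ?q * (norm W * (1 + norm dW / norm W)))\<^sup>2"
    by (rule power_mono) simp
  moreover have "F ** pinv W = E" and "F ** pinv W ** W = F"
    using F WB by (simp_all add: matrix_mul_assoc [symmetric])
  ultimately show ?thesis
    by (simp add: power_mult_distrib power_divide mult_ac)
qed

lemma perturbation_factor_le:
  fixes g d x rr nr :: real
  assumes g: "0 \<le> g" and d: "0 \<le> d" "d \<le> x" and rr: "1 \<le> rr" and nr: "1 \<le> nr"
    and x: "nr * x < 1"
  shows "g * (1 + d)\<^sup>2 * ((1 + x) / (1 - x))\<^sup>2 \<le> g * (1 + d)\<^sup>2 * ((1 + rr * x) / (1 - nr * x))\<^sup>2"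
    and "g * (1 + d)\<^sup>2 * ((1 + rr * x) / (1 - nr * x))\<^sup>2 \<le> g * (1 + rr * x) ^ 4 / (1 - nr * x)\<^sup>2"
proof -
  have x0: "0 \<le> x" using d by simp
  have x1: "x < 1"
    using mult_right_mono [OF nr x0] x by simp
  have "(1 + x) * (1 - nr * x) \<le> (1 + rr * x) * (1 - x)"
  proof -
    have "0 \<le> x * ((rr - 1) * (1 - x) + (nr - 1) * (1 + x))"
      using x0 x1 rr nr by simp
    then show ?thesis by (simp add: algebra_simps)
  qed
  then have "(1 + x) / (1 - x) \<le> (1 + rr * x) / (1 - nr * x)"
    using x1 x by (simp add: divide_simps)
  then have "((1 + x) / (1 - x))\<^sup>2 \<le> ((1 + rr * x) / (1 - nr * x))\<^sup>2"
    using x0 x1 by (intro power_mono) simp_all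
  then show "g * (1 + d)\<^sup>2 * ((1 + x) / (1 - x))\<^sup>2 \<le> g * (1 + d)\<^sup>2 * ((1 + rr * x) / (1 - nr * x))\<^sup>2"
    using g by (simp add: mult_left_mono)
  have "d \<le> rr * x" using d mult_right_mono [OF rr x0] by simp
  then have "(1 + d)\<^sup>2 \<le> (1 + rr * x)\<^sup>2" using d by (intro power_mono) simp_all
  then have "g * (1 + d)\<^sup>2 * ((1 + rr * x) / (1 - nr * x))\<^sup>2
      \<le> g * (1 + rr * x)\<^sup>2 * ((1 + rr * x) / (1 - nr * x))\<^sup>2"
    using g by (simp add: mult_left_mono mult_right_mono)
  also have "\<dots> = g * (1 + rr * x) ^ 4 / (1 - nr * x)\<^sup>2"
    by (simp add: power_divide power2_eq_square power4_eq_xxxx)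
  finally show "g * (1 + d)\<^sup>2 * ((1 + rr * x) / (1 - nr * x))\<^sup>2 \<le> g * (1 + rr * x) ^ 4 / (1 - nr * x)\<^sup>2" .
qed

subsection \<open>Class indicator matrices\<close>

lemma ind_mat_eq_ind_mat_comp_mult:
  fixes lab :: "'n::finite \<Rightarrow> 'k::finite" and G :: "'r::finite \<Rightarrow> 'n" and W :: "real^'n^'r"
  assumes supp: "\<And>i j. lab (G i) \<noteq> lab j \<Longrightarrow> W $ i $ j = 0"
    and cols: "\<And>j. (\<Sum>i\<in>UNIV. W $ i $ j) = 1"
  shows "ind_mat lab = ind_mat (lab \<circ> G) ** W"
proof -
  have "(\<Sum>i\<in>UNIV. (if lab (G i) = k then 1 else 0) * W $ i $ j) = (if lab j = k then 1 else 0)"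
    for k j
  proof (cases "lab j = k")
    case True
    then have "(\<Sum>i\<in>UNIV. (if lab (G i) = k then 1 else 0) * W $ i $ j) = (\<Sum>i\<in>UNIV. W $ i $ j)"
      using supp by (intro sum.cong) auto
    then show ?thesis using cols True by simp
  next
    case False
    then show ?thesis using supp by (simp add: sum.neutral)
  qed
  then show ?thesis
    by (simp add: ind_mat_def vec_eq_iff matrix_matrix_mult_def)
qed

lemma ind_mat_neq_0: "ind_mat lab \<noteq> 0"
proof
  assume "ind_mat lab = 0"
  then have "ind_mat lab $ lab undefined $ undefined = 0" by simp
  then show False by (simp add: ind_mat_def)
qed

lemma card_class_ge_1:
  fixes lab :: "'n::finite \<Rightarrow> 'k" and G :: "'r \<Rightarrow> 'n"
  assumes "1 \<le> card {i. lab (G i) = k}"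
  shows "1 \<le> card {j. lab j = k}"
proof -
  obtain i where "lab (G i) = k" using assms by fastforce
  then show ?thesis by (simp add: Suc_le_eq card_gt_0_iff) blast
qed

lemma sqrt_Max_div_Min_ge_1:
  fixes c :: "'k::finite \<Rightarrow> nat"
  assumes "\<And>k. 1 \<le> c k"
  shows "1 \<le> sqrt (real (Max (range c)) / real (Min (range c)))"
proof -
  have "Min (range c) \<in> range c" by (simp add: Min_in)
  then have "1 \<le> Min (range c)" and "Min (range c) \<le> Max (range c)"
    using assms by auto
  then have "1 \<le> real (Max (range c)) / real (Min (range c))"
    using assms by (auto simp: le_divide_eq Suc_le_eq)
  then show ?thesis by simp
qed

lemma transpose_injective_of_full_row_rank:
  fixes W :: "real^'n^'r"
  assumes "rank W = CARD('r)" and "transpose W *v y = 0"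
  shows "y = 0"
proof -
  have "rank (transpose W) = CARD('r)" using assms(1) by (simp add: rank_transpose)
  then have "inj ((*v) (transpose W))" by (simp only: full_rank_injective)
  then show ?thesis using assms(2) by (metis injD matrix_vector_mult_0_right)
qed

theorem corollary2:
  fixes lab :: "'n::finite \<Rightarrow> 'k::finite"
    and G :: "'r::finite \<Rightarrow> 'n"
    and W dW :: "real^'n^'r"
  assumes G_inj: "inj G"
    and r_k: "\<And>k. card {i. lab (G i) = k} \<ge> 1"
    and W_nonneg: "\<And>i j. W $ i $ j \<ge> 0"
    and W_cols: "\<And>j. (\<Sum>i\<in>UNIV. W $ i $ j) = 1"
    and W_rank: "rank W = CARD('r)"
    and W_supp: "\<And>i j. lab (G i) \<noteq> lab j \<Longrightarrow> W $ i $ j = 0"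
    and xi_small: "spec_norm (pinv W) * spec_norm dW
       < 1 / sqrt (real (Max (range (\<lambda>k. card {j. lab j = k})))
                   / real (Min (range (\<lambda>k. card {j. lab j = k}))))"
  shows
    "let F = ind_mat lab;
         W' = W + dW;
         xi = spec_norm (pinv W) * spec_norm dW;
         delta = frob_norm dW / frob_norm W;
         n_rho = sqrt (real (Max (range (\<lambda>k. card {j. lab j = k})))
                       / real (Min (range (\<lambda>k. card {j. lab j = k}))));
         r_rho = sqrt (real (Max (range (\<lambda>k. card {i. lab (G i) = k})))
                       / real (Min (range (\<lambda>k. card {i. lab (G i) = k}))));
         X = F ** pinv W;
         X' = F ** pinv W';
         gamma = (frob_norm X)\<^sup>2 * (frob_norm W)\<^sup>2 / (frob_norm (X ** W))\<^sup>2;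
         gamma' = (frob_norm X')\<^sup>2 * (frob_norm W')\<^sup>2 / (frob_norm (X' ** W'))\<^sup>2
     in delta \<le> xi
        \<and> gamma' \<le> gamma * (1 + delta)\<^sup>2 * ((1 + r_rho * xi) / (1 - n_rho * xi))\<^sup>2
        \<and> gamma * (1 + delta)\<^sup>2 * ((1 + r_rho * xi) / (1 - n_rho * xi))\<^sup>2
            \<le> gamma * (1 + r_rho * xi) ^ 4 / (1 - n_rho * xi)\<^sup>2"
proof -
  define xi where "xi = spec_norm (pinv W) * spec_norm dW"
  define n_rho where "n_rho = sqrt (real (Max (range (\<lambda>k. card {j. lab j = k})))
                       / real (Min (range (\<lambda>k. card {j. lab j = k}))))"
  define r_rho where "r_rho = sqrt (real (Max (range (\<lambda>k. card {i. lab (G i) = k})))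
                       / real (Min (range (\<lambda>k. card {i. lab (G i) = k}))))"
  have inj: "\<And>y. transpose W *v y = 0 \<Longrightarrow> y = 0"
    using W_rank by (rule transpose_injective_of_full_row_rank)
  have n_rho: "1 \<le> n_rho"
    unfolding n_rho_def using card_class_ge_1 [of lab G, OF r_k] by (rule sqrt_Max_div_Min_ge_1)
  have r_rho: "1 \<le> r_rho" unfolding r_rho_def using r_k by (rule sqrt_Max_div_Min_ge_1)
  have n_rho_xi: "n_rho * xi < 1"
    using xi_small n_rho by (simp add: xi_def n_rho_def field_simps)
  moreover have "0 \<le> xi" by (simp add: xi_def spec_norm_nonneg)
  ultimately have small: "xi < 1"
    using mult_right_mono [OF n_rho, of xi] by simp
  have delta: "norm dW / norm W \<le> xi"
    unfolding xi_def by (rule relative_norm_perturb_le [OF pinv_right_inverse(2) [of W, OF inj]])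
  define gamma where "gamma = (norm (ind_mat lab ** pinv W))\<^sup>2 * (norm W)\<^sup>2
      / (norm (ind_mat lab ** pinv W ** W))\<^sup>2"
  have gamma': "(norm (ind_mat lab ** pinv (W + dW)))\<^sup>2 * (norm (W + dW))\<^sup>2
      / (norm (ind_mat lab ** pinv (W + dW) ** (W + dW)))\<^sup>2
    \<le> gamma * (1 + norm dW / norm W)\<^sup>2 * ((1 + xi) / (1 - xi))\<^sup>2"
    unfolding gamma_def xi_def
    using ind_mat_eq_ind_mat_comp_mult [of lab G W, OF W_supp W_cols] small ind_mat_neq_0 [of lab]
    by (intro frob_ratio_pinv_perturb_le [OF inj]) (simp_all add: xi_def)
  have "0 \<le> gamma" and "0 \<le> norm dW / norm W" by (simp_all add: gamma_def)
  note factor = perturbation_factor_le [OF this delta r_rho n_rho n_rho_xi]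
  show ?thesis
    unfolding Let_def frob_norm_eq_norm xi_def [symmetric] n_rho_def [symmetric]
      r_rho_def [symmetric] gamma_def [symmetric]
    using delta order_trans [OF gamma' factor(1)] factor(2) by blast
qed

end
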